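(* Let $n\ge 2$ and let $P=(P_1,\dots,P_t)$ be a partition of $\{1,\dots,n+1\}$; put $n_i=|P_i|$ and, for $u\ge 1$, let $m_u$ be the number of parts of size $u$. Then $$|Aut({\cal K}(P))|=\Big(\prod_{i=1}^t (n_i+1)!\Big)\prod_{u\ge 1} m_u!\,.$$
   Context: For a partition $P=(P_1,\dots,P_t)$ of $\{1,\dots,n+1\}$, ${\cal K}(P)$ is the simplicial complex on the vertex set $\{1,\dots,n+1\}\cup\{p_1,\dots,p_t\}$ ($t$ new vertices) whose $n$-faces are the sets $\{y_1,\dots,y_{n+1}\}$ with, for each $i$, $y_i=i$ or $y_i=p_j$ where $i\in P_j$, subject to the $y_i$ being pairwise distinct; its faces are all nonempty subsets of these. $Aut({\cal K})$ is the group of permutations of the vertices of ${\cal K}$ mapping the set of faces onto itself. *)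

theory Defs
  imports Main "HOL-Library.Disjoint_Sets" "HOL-Combinatorics.Permutations"
begin

text \<open>A partition P of {1..n+1} is represented as a set of parts (partition_on).
  Vertices of K(P): Inl i for i in {1..n+1}, and Inr B for the new vertex p_B of a part B.\<close>

type_synonym vtx = "nat + nat set"

definition part_of :: "nat set set \<Rightarrow> nat \<Rightarrow> nat set" where
  "part_of P i = (THE B. B \<in> P \<and> i \<in> B)"

definition K_vertices :: "nat \<Rightarrow> nat set set \<Rightarrow> vtx set" where
  "K_vertices n P = Inl ` {1..n+1} \<union> Inr ` P"

definition K_facets :: "nat \<Rightarrow> nat set set \<Rightarrow> vtx set set" where
  "K_facets n P = { y ` {1..n+1} | y :: nat \<Rightarrow> vtx.
      (\<forall>i\<in>{1..n+1}. y i = Inl i \<or> y i = Inr (part_of P i)) \<and> inj_on y {1..n+1} }"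

definition K_faces :: "nat \<Rightarrow> nat set set \<Rightarrow> vtx set set" where
  "K_faces n P = {F. F \<noteq> {} \<and> (\<exists>G\<in>K_facets n P. F \<subseteq> G)}"

definition K_Aut :: "nat \<Rightarrow> nat set set \<Rightarrow> (vtx \<Rightarrow> vtx) set" where
  "K_Aut n P = {\<sigma>. \<sigma> permutes K_vertices n P \<and>
                   (\<lambda>F. \<sigma> ` F) ` K_faces n P = K_faces n P}"

end

theory Submission
  imports Defs "HOL-Library.FuncSet"
begin

text \<open>
  \<open>K(P)\<close> is the join, over the parts \<open>B\<close>, of the boundaries of the simplices with
  vertex sets \<open>B \<union> {p\<^sub>B}\<close>: a nonempty set of vertices is a face iff it contains none
  of these blocks, and the blocks are exactly the minimal non-faces. Hence the automorphisms
  are the vertex permutations that permute the blocks. Such a permutation induces a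
  size-preserving permutation of the blocks, which can be chosen in \<open>\<Prod>\<^sub>u m\<^sub>u!\<close> ways,
  and the permutations inducing a given one form a coset of the block-wise stabiliser, of
  order \<open>\<Prod>\<^sub>i (n\<^sub>i + 1)!\<close>.
\<close>

lemma permutes_bij_betw_fibre:
  assumes "p permutes S" "finite S" "\<forall>x\<in>S. g (p x) = g x"
  shows "bij_betw p {x\<in>S. g x = k} {x\<in>S. g x = k}"
proof -
  have "p ` {x\<in>S. g x = k} = {x\<in>S. g x = k}"
    by (rule endo_inj_surj)
       (use assms permutes_in_image[OF assms(1)] permutes_inj_on[OF assms(1)] in auto)
  then show ?thesis
    using permutes_inj_on[OF assms(1)] by (simp add: bij_betw_def)
qed

lemma permutes_glue_fibres:
  assumes "finite S" and f: "\<forall>k\<in>g ` S. f k permutes {x\<in>S. g x = k}"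
  shows "(\<lambda>x. if x \<in> S then f (g x) x else x) permutes S
         \<and> (\<forall>x\<in>S. g (if x \<in> S then f (g x) x else x) = g x)"
    (is "?p permutes S \<and> _")
proof -
  have f_in: "f (g x) x \<in> {y\<in>S. g y = g x}" if "x \<in> S" for x
    using permutes_in_image[OF f[rule_format, of "g x"]] that by auto
  have "inj_on ?p S"
  proof (rule inj_onI)
    fix x y assume x: "x \<in> S" and y: "y \<in> S" and eq: "?p x = ?p y"
    then have "g x = g y" using f_in by (metis (mono_tags, lifting) mem_Collect_eq)
    with eq x y have "f (g x) x = f (g x) y" by simp
    then show "x = y" using permutes_inj[OF f[rule_format, of "g x"]] x by (auto dest: injD)
  qed
  moreover have "?p ` S = S"
    by (rule endo_inj_surj[OF assms(1) _ \<open>inj_on ?p S\<close>]) (use f_in in auto)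
  ultimately have "?p permutes S"
    by (intro bij_imp_permutes) (auto simp: bij_betw_def)
  then show ?thesis using f_in by auto
qed

lemma card_fibre_preserving_permutes:
  assumes "finite S"
  shows "card {p. p permutes S \<and> (\<forall>x\<in>S. g (p x) = g x)} =
         (\<Prod>k\<in>g ` S. fact (card {x\<in>S. g x = k}))"
proof -
  define F where "F k = {x\<in>S. g x = k}" for k
  let ?A = "{p. p permutes S \<and> (\<forall>x\<in>S. g (p x) = g x)}"
  let ?B = "\<Pi>\<^sub>E k\<in>g ` S. {q. q permutes F k}"
  have "bij_betw (\<lambda>p. \<lambda>k\<in>g ` S. restrict_id p (F k)) ?A ?B"
  proof (rule bij_betw_byWitness[where f' = "\<lambda>f x. if x \<in> S then f (g x) x else x"])
    show "\<forall>p\<in>?A. (\<lambda>x. if x \<in> S then (\<lambda>k\<in>g ` S. restrict_id p (F k)) (g x) x else x) = p"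
      by (auto simp: fun_eq_iff F_def permutes_not_in)
    show "\<forall>f\<in>?B. (\<lambda>k\<in>g ` S. restrict_id (\<lambda>x. if x \<in> S then f (g x) x else x) (F k)) = f"
    proof
      fix f assume f: "f \<in> ?B"
      have "restrict_id (\<lambda>x. if x \<in> S then f (g x) x else x) (F k) = f k" if "k \<in> g ` S" for k
      proof -
        have "f k permutes F k" using f that by (auto simp: F_def)
        then show ?thesis
          using that by (auto simp: fun_eq_iff F_def restrict_id_def permutes_not_in)
      qed
      with f show "(\<lambda>k\<in>g ` S. restrict_id (\<lambda>x. if x \<in> S then f (g x) x else x) (F k)) = f"
        by (intro extensionalityI[where A = "g ` S"]) (auto simp: PiE_iff)
    qed
    show "(\<lambda>p. \<lambda>k\<in>g ` S. restrict_id p (F k)) ` ?A \<subseteq> ?B"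
      using permutes_bij_betw_fibre[OF _ assms] by (auto simp: F_def intro!: permutes_restrict_id)
    show "(\<lambda>f x. if x \<in> S then f (g x) x else x) ` ?B \<subseteq> ?A"
      using permutes_glue_fibres[OF assms] by (auto simp: F_def PiE_iff)
  qed
  then have "card ?A = card ?B" by (rule bij_betw_same_card)
  also have "\<dots> = (\<Prod>k\<in>g ` S. fact (card (F k)))"
    using assms by (simp add: card_PiE F_def card_permutations)
  finally show ?thesis by (simp add: F_def)
qed

definition block_of :: "'a set set \<Rightarrow> 'a \<Rightarrow> 'a set" where
  "block_of Q x = (THE b. b \<in> Q \<and> x \<in> b)"

lemma block_of_eq:
  assumes "partition_on V Q" "b \<in> Q" "x \<in> b"
  shows "block_of Q x = b"
  unfolding block_of_def
proof (rule the_equality)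
  show "b \<in> Q \<and> x \<in> b" using assms by auto
  fix c assume "c \<in> Q \<and> x \<in> c"
  then show "c = b" using assms partition_onD2[OF assms(1)] by (auto simp: disjoint_def)
qed

lemma block_of_in:
  assumes "partition_on V Q" "x \<in> V"
  shows "block_of Q x \<in> Q" "x \<in> block_of Q x"
proof -
  obtain b where "b \<in> Q" "x \<in> b" using assms partition_onD1[OF assms(1)] by auto
  then show "block_of Q x \<in> Q" "x \<in> block_of Q x" using block_of_eq[OF assms(1)] by auto
qed

lemma card_block_stabilising_permutes:
  assumes Q: "partition_on V Q" and "finite V"
  shows "card {\<tau>. \<tau> permutes V \<and> (\<forall>b\<in>Q. \<tau> ` b = b)} = (\<Prod>b\<in>Q. fact (card b))"
proof -
  have fibre: "{x\<in>V. block_of Q x = b} = b" if "b \<in> Q" for b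
  proof -
    have "b \<subseteq> V" using partition_onD1[OF Q] that by blast
    then show ?thesis using block_of_eq[OF Q that] block_of_in(2)[OF Q] by blast
  qed
  have blocks: "block_of Q ` V = Q"
  proof
    show "block_of Q ` V \<subseteq> Q" using block_of_in(1)[OF Q] by blast
    show "Q \<subseteq> block_of Q ` V"
    proof
      fix b assume "b \<in> Q"
      then have "b \<noteq> {}" using partition_onD3[OF Q] by blast
      then show "b \<in> block_of Q ` V" using fibre[OF \<open>b \<in> Q\<close>] by blast
    qed
  qed
  have stabilising_iff: "(\<forall>b\<in>Q. \<tau> ` b = b) \<longleftrightarrow> (\<forall>x\<in>V. block_of Q (\<tau> x) = block_of Q x)"
    if \<tau>: "\<tau> permutes V" for \<tau>
  proof
    assume stab: "\<forall>b\<in>Q. \<tau> ` b = b"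
    show "\<forall>x\<in>V. block_of Q (\<tau> x) = block_of Q x"
    proof
      fix x assume "x \<in> V"
      let ?b = "block_of Q x"
      have "?b \<in> Q" "x \<in> ?b" using block_of_in[OF Q \<open>x \<in> V\<close>] by auto
      then have "\<tau> x \<in> ?b" using stab by blast
      then show "block_of Q (\<tau> x) = ?b" using block_of_eq[OF Q \<open>?b \<in> Q\<close>] by simp
    qed
  next
    assume fibres: "\<forall>x\<in>V. block_of Q (\<tau> x) = block_of Q x"
    show "\<forall>b\<in>Q. \<tau> ` b = b"
    proof
      fix b assume "b \<in> Q"
      have "\<tau> ` {x\<in>V. block_of Q x = b} = {x\<in>V. block_of Q x = b}"
        using permutes_bij_betw_fibre[OF \<tau> \<open>finite V\<close> fibres] by (simp add: bij_betw_def)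
      then show "\<tau> ` b = b" using fibre[OF \<open>b \<in> Q\<close>] by simp
    qed
  qed
  have "{\<tau>. \<tau> permutes V \<and> (\<forall>b\<in>Q. \<tau> ` b = b)} =
        {\<tau>. \<tau> permutes V \<and> (\<forall>x\<in>V. block_of Q (\<tau> x) = block_of Q x)}"
    using stabilising_iff by auto
  then show ?thesis
    using card_fibre_preserving_permutes[OF \<open>finite V\<close>, of "block_of Q"]
    by (simp add: blocks fibre)
qed

definition block_permutations :: "'a set \<Rightarrow> 'a set set \<Rightarrow> ('a \<Rightarrow> 'a) set" where
  "block_permutations V Q = {\<sigma>. \<sigma> permutes V \<and> (\<forall>b\<in>Q. \<sigma> ` b \<in> Q)}"

definition block_action :: "'a set set \<Rightarrow> ('a \<Rightarrow> 'a) \<Rightarrow> 'a set \<Rightarrow> 'a set" where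
  "block_action Q \<sigma> = restrict_id (image \<sigma>) Q"

lemma block_action_eq_iff:
  "block_action Q \<sigma> = block_action Q \<sigma>' \<longleftrightarrow> (\<forall>b\<in>Q. \<sigma> ` b = \<sigma>' ` b)"
proof
  assume "block_action Q \<sigma> = block_action Q \<sigma>'"
  then show "\<forall>b\<in>Q. \<sigma> ` b = \<sigma>' ` b" by (metis block_action_def restrict_id_simps(1))
qed (auto simp: block_action_def restrict_id_def fun_eq_iff)

lemma block_action_permutes:
  assumes "finite Q" "\<sigma> \<in> block_permutations V Q"
  shows "block_action Q \<sigma> permutes Q"
proof -
  have inj: "inj \<sigma>" using assms(2) permutes_inj by (auto simp: block_permutations_def)
  then have "inj_on (image \<sigma>) Q" by (auto simp: inj_on_def inj_image_eq_iff)
  moreover have "image \<sigma> ` Q = Q"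
    by (rule endo_inj_surj[OF assms(1) _ \<open>inj_on (image \<sigma>) Q\<close>])
       (use assms(2) in \<open>auto simp: block_permutations_def\<close>)
  ultimately show ?thesis
    unfolding block_action_def by (intro permutes_restrict_id) (simp add: bij_betw_def)
qed

lemma card_block_action:
  assumes "\<sigma> permutes V" "b \<in> Q"
  shows "card (block_action Q \<sigma> b) = card b"
  using assms permutes_inj_on[OF assms(1)] by (simp add: block_action_def card_image)

lemma ex_block_permutation_with_action:
  assumes Q: "partition_on V Q" and "finite V"
    and \<pi>: "\<pi> permutes Q" and card_\<pi>: "\<forall>b\<in>Q. card (\<pi> b) = card b"
  shows "\<exists>\<sigma>\<in>block_permutations V Q. block_action Q \<sigma> = \<pi>"
proof -
  have fin: "finite b" if "b \<in> Q" for b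
  proof (rule finite_subset[OF _ \<open>finite V\<close>])
    show "b \<subseteq> V" using partition_onD1[OF Q] that by blast
  qed
  have "\<exists>h. bij_betw h b (\<pi> b)" if "b \<in> Q" for b
  proof (rule finite_same_card_bij)
    have "\<pi> b \<in> Q" using permutes_in_image[OF \<pi>] that by simp
    then show "finite b" "finite (\<pi> b)" using fin that by auto
    show "card b = card (\<pi> b)" using card_\<pi> that by simp
  qed
  then obtain H where H: "\<And>b. b \<in> Q \<Longrightarrow> bij_betw (H b) b (\<pi> b)" by metis
  define \<sigma> where "\<sigma> x = (if x \<in> V then H (block_of Q x) x else x)" for x
  have \<sigma>_block: "\<sigma> ` b = \<pi> b" if "b \<in> Q" for b
  proof -
    have "\<sigma> x = H b x" if "x \<in> b" for x
      using \<open>b \<in> Q\<close> that block_of_eq[OF Q \<open>b \<in> Q\<close> that] partition_onD1[OF Q]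
      by (auto simp: \<sigma>_def)
    then have "\<sigma> ` b = H b ` b" by (rule image_cong[OF refl])
    then show ?thesis using H[OF that] by (simp add: bij_betw_def)
  qed
  have "\<sigma> ` V = V"
  proof -
    have "\<sigma> ` V = (\<Union>b\<in>Q. \<sigma> ` b)" using partition_onD1[OF Q] by (simp add: image_Union)
    also have "\<dots> = \<Union> (\<pi> ` Q)" using \<sigma>_block by simp
    finally show ?thesis using permutes_image[OF \<pi>] partition_onD1[OF Q] by simp
  qed
  then have "bij_betw \<sigma> V V"
    using eq_card_imp_inj_on[OF \<open>finite V\<close>, of \<sigma>] by (simp add: bij_betw_def)
  then have "\<sigma> permutes V" by (rule bij_imp_permutes) (simp add: \<sigma>_def)
  then have "\<sigma> \<in> block_permutations V Q"
    using \<sigma>_block permutes_in_image[OF \<pi>] by (simp add: block_permutations_def)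
  moreover have "block_action Q \<sigma> = \<pi>"
  proof
    fix b show "block_action Q \<sigma> b = \<pi> b"
      using \<sigma>_block permutes_not_in[OF \<pi>, of b] by (cases "b \<in> Q") (simp_all add: block_action_def)
  qed
  ultimately show ?thesis by blast
qed

lemma card_block_action_fibre:
  assumes \<sigma>\<^sub>0: "\<sigma>\<^sub>0 \<in> block_permutations V Q"
  shows "card {\<sigma>\<in>block_permutations V Q. block_action Q \<sigma> = block_action Q \<sigma>\<^sub>0} =
         card {\<tau>. \<tau> permutes V \<and> (\<forall>b\<in>Q. \<tau> ` b = b)}"
proof -
  have perm: "\<sigma>\<^sub>0 permutes V" using \<sigma>\<^sub>0 by (simp add: block_permutations_def)
  note inverses = permutes_inverses[OF perm]
  have "bij_betw (\<lambda>\<sigma>. inv \<sigma>\<^sub>0 \<circ> \<sigma>)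
          {\<sigma>\<in>block_permutations V Q. block_action Q \<sigma> = block_action Q \<sigma>\<^sub>0}
          {\<tau>. \<tau> permutes V \<and> (\<forall>b\<in>Q. \<tau> ` b = b)}"
  proof (rule bij_betw_byWitness[where f' = "\<lambda>\<tau>. \<sigma>\<^sub>0 \<circ> \<tau>"])
    show "(\<lambda>\<sigma>. inv \<sigma>\<^sub>0 \<circ> \<sigma>) ` {\<sigma>\<in>block_permutations V Q. block_action Q \<sigma> = block_action Q \<sigma>\<^sub>0}
          \<subseteq> {\<tau>. \<tau> permutes V \<and> (\<forall>b\<in>Q. \<tau> ` b = b)}"
    proof clarify
      fix \<sigma> assume \<sigma>: "\<sigma> \<in> block_permutations V Q" "block_action Q \<sigma> = block_action Q \<sigma>\<^sub>0"
      have "(inv \<sigma>\<^sub>0 \<circ> \<sigma>) ` b = b" if "b \<in> Q" for b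
      proof -
        have "(inv \<sigma>\<^sub>0 \<circ> \<sigma>) ` b = inv \<sigma>\<^sub>0 ` \<sigma> ` b" by (rule image_comp[symmetric])
        also have "\<dots> = inv \<sigma>\<^sub>0 ` \<sigma>\<^sub>0 ` b" using \<sigma>(2) that by (simp add: block_action_eq_iff)
        also have "\<dots> = b" by (rule image_inv_f_f[OF permutes_inj[OF perm]])
        finally show ?thesis .
      qed
      moreover have "inv \<sigma>\<^sub>0 \<circ> \<sigma> permutes V"
        using \<sigma>(1) permutes_inv[OF perm] by (auto simp: block_permutations_def intro: permutes_compose)
      ultimately show "inv \<sigma>\<^sub>0 \<circ> \<sigma> permutes V \<and> (\<forall>b\<in>Q. (inv \<sigma>\<^sub>0 \<circ> \<sigma>) ` b = b)" by blast
    qed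
    show "(\<lambda>\<tau>. \<sigma>\<^sub>0 \<circ> \<tau>) ` {\<tau>. \<tau> permutes V \<and> (\<forall>b\<in>Q. \<tau> ` b = b)}
          \<subseteq> {\<sigma>\<in>block_permutations V Q. block_action Q \<sigma> = block_action Q \<sigma>\<^sub>0}"
    proof clarify
      fix \<tau> assume \<tau>: "\<tau> permutes V" "\<forall>b\<in>Q. \<tau> ` b = b"
      have "(\<sigma>\<^sub>0 \<circ> \<tau>) ` b = \<sigma>\<^sub>0 ` b" if "b \<in> Q" for b
        unfolding image_comp[symmetric] using \<tau>(2) that by simp
      moreover have "\<sigma>\<^sub>0 \<circ> \<tau> permutes V" using \<tau>(1) perm by (rule permutes_compose)
      ultimately show "\<sigma>\<^sub>0 \<circ> \<tau> \<in> block_permutations V Q \<and>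
                       block_action Q (\<sigma>\<^sub>0 \<circ> \<tau>) = block_action Q \<sigma>\<^sub>0"
        using \<sigma>\<^sub>0 by (simp add: block_permutations_def block_action_eq_iff)
    qed
  qed (auto simp: fun_eq_iff inverses)
  then show ?thesis by (rule bij_betw_same_card)
qed

lemma card_block_permutations:
  assumes Q: "partition_on V Q" and "finite V"
  shows "card (block_permutations V Q) =
           (\<Prod>k\<in>card ` Q. fact (card {b\<in>Q. card b = k})) * (\<Prod>b\<in>Q. fact (card b))"
proof -
  let ?A = "block_permutations V Q"
  let ?S = "{\<pi>. \<pi> permutes Q \<and> (\<forall>b\<in>Q. card (\<pi> b) = card b)}"
  let ?T = "{\<tau>. \<tau> permutes V \<and> (\<forall>b\<in>Q. \<tau> ` b = b)}"
  let ?fibre = "\<lambda>\<pi>. {\<sigma>\<in>?A. block_action Q \<sigma> = \<pi>}"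
  have "finite Q" using finite_elements[OF \<open>finite V\<close> Q] .
  have "finite ?A"
    by (rule finite_subset[OF _ finite_permutations[OF \<open>finite V\<close>]])
       (simp add: block_permutations_def Collect_mono)
  have "finite ?S"
    by (rule finite_subset[OF _ finite_permutations[OF \<open>finite Q\<close>]]) (simp add: Collect_mono)
  have "?A = (\<Union>\<pi>\<in>?S. ?fibre \<pi>)"
    using block_action_permutes[OF \<open>finite Q\<close>] card_block_action
    by (auto simp: block_permutations_def)
  then have "card ?A = card (\<Union>\<pi>\<in>?S. ?fibre \<pi>)" by simp
  also have "\<dots> = (\<Sum>\<pi>\<in>?S. card (?fibre \<pi>))"
    by (rule card_UN_disjoint[OF \<open>finite ?S\<close>]) (auto intro: finite_subset[OF _ \<open>finite ?A\<close>])
  also have "\<dots> = (\<Sum>\<pi>\<in>?S. card ?T)"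
  proof (rule sum.cong)
    fix \<pi> assume "\<pi> \<in> ?S"
    then obtain \<sigma>\<^sub>0 where \<sigma>\<^sub>0: "\<sigma>\<^sub>0 \<in> ?A" "block_action Q \<sigma>\<^sub>0 = \<pi>"
      using ex_block_permutation_with_action[OF Q \<open>finite V\<close>] by blast
    show "card (?fibre \<pi>) = card ?T" using card_block_action_fibre[OF \<sigma>\<^sub>0(1)] \<sigma>\<^sub>0(2) by simp
  qed simp
  finally have "card ?A = card ?S * card ?T" by simp
  moreover have "card ?S = (\<Prod>k\<in>card ` Q. fact (card {b\<in>Q. card b = k}))"
    by (rule card_fibre_preserving_permutes[OF \<open>finite Q\<close>])
  moreover have "card ?T = (\<Prod>b\<in>Q. fact (card b))"
    by (rule card_block_stabilising_permutes[OF Q \<open>finite V\<close>])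
  ultimately show ?thesis by simp
qed

definition boundary_join :: "'a set \<Rightarrow> 'a set set \<Rightarrow> 'a set set" where
  "boundary_join V Q = {F. F \<noteq> {} \<and> F \<subseteq> V \<and> (\<forall>b\<in>Q. \<not> b \<subseteq> F)}"

lemma block_permutation_image_boundary_join:
  assumes "finite V" "partition_on V Q" and \<sigma>: "\<sigma> \<in> block_permutations V Q"
  shows "(\<lambda>F. \<sigma> ` F) ` boundary_join V Q = boundary_join V Q"
proof (rule endo_inj_surj)
  have perm: "\<sigma> permutes V" using \<sigma> by (simp add: block_permutations_def)
  show "finite (boundary_join V Q)"
  proof (rule finite_subset)
    show "boundary_join V Q \<subseteq> Pow V" by (auto simp: boundary_join_def)
  qed (use \<open>finite V\<close> in simp)
  show "inj_on (\<lambda>F. \<sigma> ` F) (boundary_join V Q)"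
    using permutes_inj[OF perm] by (auto simp: inj_on_def inj_image_eq_iff)
  have onto: "c \<in> image \<sigma> ` Q" if "c \<in> Q" for c
  proof -
    have "block_action Q \<sigma> permutes Q"
      using block_action_permutes[OF finite_elements[OF assms(1,2)] \<sigma>] .
    from permutes_image[OF this] have "c \<in> block_action Q \<sigma> ` Q" using that by simp
    then obtain b where "b \<in> Q" "c = block_action Q \<sigma> b" by blast
    then show ?thesis by (simp add: block_action_def)
  qed
  show "(\<lambda>F. \<sigma> ` F) ` boundary_join V Q \<subseteq> boundary_join V Q"
  proof clarify
    fix F assume F: "F \<in> boundary_join V Q"
    have "\<not> c \<subseteq> \<sigma> ` F" if c: "c \<in> Q" for c
    proof
      assume "c \<subseteq> \<sigma> ` F"
      moreover obtain b where "b \<in> Q" "c = \<sigma> ` b" using onto[OF c] by blast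
      ultimately have "b \<subseteq> F" using permutes_inj[OF perm] by (simp add: inj_image_subset_iff)
      then show False using F \<open>b \<in> Q\<close> by (simp add: boundary_join_def)
    qed
    then show "\<sigma> ` F \<in> boundary_join V Q"
      using F permutes_image[OF perm] by (auto simp: boundary_join_def)
  qed
qed

lemma boundary_join_automorphism_maps_blocks:
  assumes Q: "partition_on V Q" and perm: "\<sigma> permutes V"
    and aut: "(\<lambda>F. \<sigma> ` F) ` boundary_join V Q = boundary_join V Q" and "b \<in> Q"
  shows "\<sigma> ` b \<in> Q"
proof -
  have inj: "inj \<sigma>" using permutes_inj[OF perm] .
  have "b \<subseteq> V" using partition_onD1[OF Q] \<open>b \<in> Q\<close> by blast
  have "b \<noteq> {}" using partition_onD3[OF Q] \<open>b \<in> Q\<close> by blast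
  have non_face: "\<sigma> ` F \<notin> boundary_join V Q" if "F \<notin> boundary_join V Q" for F
  proof
    assume "\<sigma> ` F \<in> boundary_join V Q"
    then have "\<sigma> ` F \<in> (\<lambda>F. \<sigma> ` F) ` boundary_join V Q" using aut by simp
    then obtain G where "G \<in> boundary_join V Q" "\<sigma> ` F = \<sigma> ` G" by blast
    then show False using that inj by (simp add: inj_image_eq_iff)
  qed
  have "b \<notin> boundary_join V Q" using \<open>b \<in> Q\<close> by (auto simp: boundary_join_def)
  then have "\<sigma> ` b \<notin> boundary_join V Q" by (rule non_face)
  moreover have "\<sigma> ` b \<subseteq> V" using \<open>b \<subseteq> V\<close> permutes_image[OF perm] by blast
  ultimately obtain c where c: "c \<in> Q" "c \<subseteq> \<sigma> ` b"
    using \<open>b \<noteq> {}\<close> by (auto simp: boundary_join_def)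
  define T where "T = {x\<in>b. \<sigma> x \<in> c}"
  have "\<sigma> ` T = c" using c by (auto simp: T_def)
  \<comment> \<open>\<open>T\<close> is a nonempty subset of the minimal non-face \<open>b\<close>, hence a face unless \<open>T = b\<close>\<close>
  have "T = b"
  proof (rule ccontr)
    assume "T \<noteq> b"
    have "T \<noteq> {}" using \<open>\<sigma> ` T = c\<close> c(1) partition_onD3[OF Q] by auto
    moreover have "\<not> d \<subseteq> T" if "d \<in> Q" for d
    proof
      assume "d \<subseteq> T"
      then have "d \<subseteq> b" by (auto simp: T_def)
      moreover have "d \<noteq> {}" using partition_onD3[OF Q] that by blast
      ultimately have "d = b"
        using disjointD[OF partition_onD2[OF Q] that \<open>b \<in> Q\<close>] by blast
      with \<open>d \<subseteq> T\<close> \<open>T \<noteq> b\<close> show False by (auto simp: T_def)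
    qed
    ultimately have "T \<in> boundary_join V Q"
      using \<open>b \<subseteq> V\<close> by (auto simp: boundary_join_def T_def)
    then have "c \<in> boundary_join V Q" using aut \<open>\<sigma> ` T = c\<close> by blast
    then show False using c(1) by (auto simp: boundary_join_def)
  qed
  then show ?thesis using \<open>\<sigma> ` T = c\<close> c(1) by simp
qed

lemma boundary_join_automorphisms:
  assumes "finite V" "partition_on V Q"
  shows "{\<sigma>. \<sigma> permutes V \<and> (\<lambda>F. \<sigma> ` F) ` boundary_join V Q = boundary_join V Q} =
         block_permutations V Q"
  using block_permutation_image_boundary_join[OF assms]
        boundary_join_automorphism_maps_blocks[OF assms(2)]
  by (auto simp: block_permutations_def)

lemma card_partition_blocks_subset:
  assumes Q: "partition_on V Q" and "finite V"
  shows "card ` Q \<subseteq> {1..card V}"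
proof
  fix k assume "k \<in> card ` Q"
  then obtain b where b: "b \<in> Q" "k = card b" by blast
  have "b \<subseteq> V" "b \<noteq> {}" using partition_onD1[OF Q] partition_onD3[OF Q] b(1) by blast+
  then have "0 < card b" "card b \<le> card V"
    using \<open>finite V\<close> finite_subset card_gt_0_iff card_mono by metis+
  then show "k \<in> {1..card V}" using b(2) by simp
qed

lemma prod_fact_card_classes_superset:
  assumes "finite K" "card ` Q \<subseteq> K"
  shows "(\<Prod>k\<in>card ` Q. fact (card {b\<in>Q. card b = k})) = (\<Prod>k\<in>K. fact (card {b\<in>Q. card b = k}))"
proof (rule prod.mono_neutral_left[OF assms])
  show "\<forall>k\<in>K - card ` Q. fact (card {b\<in>Q. card b = k}) = 1"
  proof
    fix k assume "k \<in> K - card ` Q"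
    then have "{b\<in>Q. card b = k} = {}" by blast
    then show "fact (card {b\<in>Q. card b = k}) = 1" by (simp only: card.empty fact_0)
  qed
qed

lemma prod_fact_card_classes_Suc_image:
  assumes inj: "inj_on f P" and card_f: "\<And>B. B \<in> P \<Longrightarrow> card (f B) = Suc (card B)"
  shows "(\<Prod>k\<in>card ` f ` P. fact (card {b\<in>f ` P. card b = k})) =
         (\<Prod>k\<in>card ` P. fact (card {B\<in>P. card B = k}))"
proof -
  have "card ` f ` P = Suc ` card ` P" using card_f by (force simp: image_image)
  moreover have "card {b\<in>f ` P. card b = Suc k} = card {B\<in>P. card B = k}" for k
  proof -
    have "{b\<in>f ` P. card b = Suc k} = f ` {B\<in>P. card B = k}" using card_f by auto
    then show ?thesis using inj by (simp add: card_image inj_on_subset)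
  qed
  ultimately show ?thesis by (simp add: prod.reindex)
qed

definition part_simplex :: "nat set \<Rightarrow> vtx set" where
  "part_simplex B = insert (Inr B) (Inl ` B)"

lemma inj_part_simplex: "inj part_simplex"
  by (auto simp: inj_def part_simplex_def)

lemma card_part_simplex:
  assumes "finite B"
  shows "card (part_simplex B) = Suc (card B)"
proof -
  have "Inr B \<notin> Inl ` B" by blast
  then have "card (part_simplex B) = Suc (card (Inl ` B :: vtx set))"
    using assms by (simp add: part_simplex_def)
  also have "card (Inl ` B :: vtx set) = card B" by (rule card_image) simp
  finally show ?thesis .
qed

lemma part_of_eq_block_of: "part_of = block_of"
  by (simp add: fun_eq_iff part_of_def block_of_def)

context
  fixes n :: nat and P :: "nat set set"
  assumes P: "partition_on {1..n+1} P"
begin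

lemma part_of_in: "i \<in> {1..n+1} \<Longrightarrow> part_of P i \<in> P" "i \<in> {1..n+1} \<Longrightarrow> i \<in> part_of P i"
  using block_of_in[OF P] by (simp_all add: part_of_eq_block_of)

lemma part_of_eq: "B \<in> P \<Longrightarrow> i \<in> B \<Longrightarrow> part_of P i = B"
  using block_of_eq[OF P] by (simp add: part_of_eq_block_of)

lemma finite_K_vertices: "finite (K_vertices n P)"
  using finite_elements[OF _ P] by (simp add: K_vertices_def)

lemma partition_on_part_simplices: "partition_on (K_vertices n P) (part_simplex ` P)"
proof (rule partition_onI)
  have "\<Union> (part_simplex ` P) = Inl ` \<Union> P \<union> Inr ` P" by (auto simp: part_simplex_def)
  then show "\<Union> (part_simplex ` P) = K_vertices n P"
    using partition_onD1[OF P] by (simp add: K_vertices_def)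
  show "disjnt a b" if ab: "a \<in> part_simplex ` P" "b \<in> part_simplex ` P" "a \<noteq> b" for a b
  proof -
    obtain B C where "B \<in> P" "C \<in> P" "a = part_simplex B" "b = part_simplex C" "B \<noteq> C"
      using ab by blast
    then show ?thesis
      using disjointD[OF partition_onD2[OF P]] by (auto simp: disjnt_def part_simplex_def)
  qed
  show "{} \<notin> part_simplex ` P" by (auto simp: part_simplex_def)
qed

lemma K_faces_subset_boundary_join:
  "K_faces n P \<subseteq> boundary_join (K_vertices n P) (part_simplex ` P)"
proof
  fix F assume "F \<in> K_faces n P"
  then obtain y where "F \<noteq> {}" and F: "F \<subseteq> y ` {1..n+1}"
    and y: "\<forall>i\<in>{1..n+1}. y i = Inl i \<or> y i = Inr (part_of P i)"
    by (auto simp: K_faces_def K_facets_def)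
  have "y ` {1..n+1} \<subseteq> K_vertices n P"
    using y part_of_in by (force simp: K_vertices_def)
  moreover have "\<not> part_simplex B \<subseteq> F" if "B \<in> P" for B
  proof
    assume B: "part_simplex B \<subseteq> F"
    then have "Inr B \<in> y ` {1..n+1}" using F by (simp add: part_simplex_def subset_iff)
    then obtain i where i: "Inr B = y i" "i \<in> {1..n+1}" by (rule imageE)
    from y i(2) have "y i = Inl i \<or> y i = Inr (part_of P i)" by blast
    then have "part_of P i = B" using i(1) by auto
    then have "i \<in> B" using part_of_in(2)[OF i(2)] by simp
    then have "Inl i \<in> y ` {1..n+1}" using B F by (auto simp: part_simplex_def)
    then obtain j where j: "Inl i = y j" "j \<in> {1..n+1}" by (rule imageE)
    from y j(2) have "y j = Inl j \<or> y j = Inr (part_of P j)" by blast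
    then have "y i = Inl i" using j(1) by auto
    then show False using i(1) by simp
  qed
  ultimately show "F \<in> boundary_join (K_vertices n P) (part_simplex ` P)"
    using \<open>F \<noteq> {}\<close> F by (auto simp: boundary_join_def)
qed

lemma boundary_join_subset_K_faces:
  "boundary_join (K_vertices n P) (part_simplex ` P) \<subseteq> K_faces n P"
proof
  fix F assume F: "F \<in> boundary_join (K_vertices n P) (part_simplex ` P)"
  then have "\<forall>B\<in>P. \<exists>v. v \<in> part_simplex B \<and> v \<notin> F" by (auto simp: boundary_join_def)
  then obtain s where s: "\<forall>B\<in>P. s B \<in> part_simplex B \<and> s B \<notin> F"
    by (rule bchoice[THEN exE])
  \<comment> \<open>\<open>y i = p\<^sub>B\<close> exactly when \<open>i\<close> is the vertex of \<open>B\<close> chosen to be missing from \<open>F\<close>\<close>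
  define y where "y i = (if s (part_of P i) = Inl i then Inr (part_of P i) else Inl i)" for i
  have "inj_on y {1..n+1}"
  proof (rule inj_onI)
    fix i j assume "y i = y j"
    then show "i = j" by (simp add: y_def split: if_splits)
  qed
  moreover have "\<forall>i\<in>{1..n+1}. y i = Inl i \<or> y i = Inr (part_of P i)" by (simp add: y_def)
  ultimately have facet: "y ` {1..n+1} \<in> K_facets n P"
    unfolding K_facets_def by (intro CollectI exI[of _ y]) simp
  have "F \<subseteq> y ` {1..n+1}"
  proof
    fix v assume "v \<in> F"
    then have v: "v \<in> K_vertices n P" using F by (auto simp: boundary_join_def)
    show "v \<in> y ` {1..n+1}"
    proof (cases v)
      case (Inl i)
      then have i: "i \<in> {1..n+1}" using v by (auto simp: K_vertices_def)
      have "s (part_of P i) \<noteq> v" using bspec[OF s part_of_in(1)[OF i]] \<open>v \<in> F\<close> by blast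
      then have "y i = v" using Inl by (simp add: y_def)
      then show ?thesis using i by blast
    next
      case (Inr B)
      then have B: "B \<in> P" using v by (auto simp: K_vertices_def)
      then have "s B \<noteq> v" using s \<open>v \<in> F\<close> by blast
      then obtain i where i: "i \<in> B" "s B = Inl i"
        using bspec[OF s B] Inr by (auto simp: part_simplex_def)
      then have "y i = v" using part_of_eq[OF B i(1)] Inr by (simp add: y_def)
      moreover have "i \<in> {1..n+1}" using partition_onD1[OF P] B i(1) by blast
      ultimately show ?thesis by blast
    qed
  qed
  then show "F \<in> K_faces n P"
    using F facet by (auto simp: K_faces_def boundary_join_def)
qed

lemma K_faces_eq_boundary_join: "K_faces n P = boundary_join (K_vertices n P) (part_simplex ` P)"
  using K_faces_subset_boundary_join boundary_join_subset_K_faces by (rule equalityI)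

lemma K_Aut_eq_block_permutations: "K_Aut n P = block_permutations (K_vertices n P) (part_simplex ` P)"
  using boundary_join_automorphisms[OF finite_K_vertices partition_on_part_simplices]
  by (simp add: K_Aut_def K_faces_eq_boundary_join)

end

theorem proposition2p7:
  fixes n :: nat and P :: "nat set set"
  assumes "n \<ge> 2"
    and "partition_on {1..n+1} P"
  shows "card (K_Aut n P) =
           (\<Prod>B\<in>P. fact (card B + 1)) *
           (\<Prod>u\<in>{1..n+1}. fact (card {B\<in>P. card B = u}))"
proof -
  let ?Q = "part_simplex ` P"
  have finite_parts: "finite B" if "B \<in> P" for B
    using that partition_onD1[OF assms(2)] finite_subset[of B "{1..n+1}"] by blast
  have inj: "inj_on part_simplex P" using inj_part_simplex by (rule inj_on_subset) simp
  have count: "card (K_Aut n P) =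
      (\<Prod>k\<in>card ` ?Q. fact (card {b\<in>?Q. card b = k})) * (\<Prod>b\<in>?Q. fact (card b))"
    unfolding K_Aut_eq_block_permutations[OF assms(2)]
    using partition_on_part_simplices[OF assms(2)] finite_K_vertices[OF assms(2)]
    by (rule card_block_permutations)
  have simplices: "(\<Prod>b\<in>?Q. fact (card b)) = (\<Prod>B\<in>P. fact (card B + 1))"
    by (simp add: prod.reindex[OF inj] card_part_simplex finite_parts)
  have "(\<Prod>k\<in>card ` ?Q. fact (card {b\<in>?Q. card b = k})) =
        (\<Prod>k\<in>card ` P. fact (card {B\<in>P. card B = k}))"
    using inj by (rule prod_fact_card_classes_Suc_image) (simp add: card_part_simplex finite_parts)
  also have "\<dots> = (\<Prod>u\<in>{1..n+1}. fact (card {B\<in>P. card B = u}))"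
  proof (rule prod_fact_card_classes_superset)
    show "card ` P \<subseteq> {1..n+1}" using card_partition_blocks_subset[OF assms(2)] by simp
  qed simp
  finally have multiplicities: "(\<Prod>k\<in>card ` ?Q. fact (card {b\<in>?Q. card b = k})) =
      (\<Prod>u\<in>{1..n+1}. fact (card {B\<in>P. card B = u}))" .
  show ?thesis unfolding count simplices multiplicities by (rule mult.commute)
qed

end
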